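(* Let $M=A+\Delta-\sigma vv^{\mathsf T}$ be a generalized modularity matrix, and let $x\neq 0$ satisfy $Mx=m_Gx$, with $x$ oriented so that $v^{\mathsf T}x\ge 0$. Then the set $S=\{i\in V: x_i\ge 0\}$ induces a connected subgraph $G(S)$ of $G$.
   Context: Let $V=\{1,\dots,n\}$ and let $A\in\mathbb{R}^{n\times n}$ be the adjacency matrix of an undirected connected weighted graph $G$ on $V$, possibly with loops, i.e. $A=(a_{ij})$ is symmetric, entrywise nonnegative and irreducible. A generalized modularity matrix is any matrix $M=A+\Delta-\sigma vv^{\mathsf T}$ where $\Delta$ is a real diagonal $n\times n$ matrix, $v\in\mathbb{R}^n$ is a nonzero entrywise nonnegative vector, and $\sigma>0$. Eigenvalues of a real symmetric matrix $X$ are ordered $\lambda_1(X)\ge\cdots\ge\lambda_n(X)$; $m_G:=\lambda_1(M)$. For $S\subseteq V$, $G(S)$ denotes the subgraph induced by $S$, whose adjacency matrix is the principal submatrix $A(S)$ of $A$ with indices in $S$; it is connected if the graph on vertex set $S$ in which distinct $i,j$ are adjacent iff $a_{ij}>0$ is connected. *)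

theory Defs
  imports "HOL-Analysis.Analysis"
begin

text \<open>Vertex set V is the finite type 'n; matrices are real^'n^'n.\<close>

definition symmetric_mat :: "real^'n^'n \<Rightarrow> bool" where
  "symmetric_mat X \<longleftrightarrow> transpose X = X"

definition nonneg_mat :: "real^'n^'n \<Rightarrow> bool" where
  "nonneg_mat X \<longleftrightarrow> (\<forall>i j. X $ i $ j \<ge> 0)"

definition nonneg_vec :: "real^'n \<Rightarrow> bool" where
  "nonneg_vec v \<longleftrightarrow> (\<forall>i. v $ i \<ge> 0)"

definition diagonal_mat :: "real^'n^'n \<Rightarrow> bool" where
  "diagonal_mat D \<longleftrightarrow> (\<forall>i j. i \<noteq> j \<longrightarrow> D $ i $ j = 0)"

definition irreducible_mat :: "real^'n^'n \<Rightarrow> bool" where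
  "irreducible_mat X \<longleftrightarrow> (\<forall>i j. (i, j) \<in> {(a, b). X $ a $ b \<noteq> 0}\<^sup>*)"

definition outer :: "real^'n \<Rightarrow> real^'n \<Rightarrow> real^'n^'n" where
  "outer u w = (\<chi> i j. u $ i * w $ j)"

definition lambda_max :: "real^'n^'n \<Rightarrow> real" where
  "lambda_max X = Max {l. \<exists>x. x \<noteq> 0 \<and> X *v x = l *\<^sub>R x}"

definition induced_connected :: "real^'n^'n \<Rightarrow> 'n set \<Rightarrow> bool" where
  "induced_connected A S \<longleftrightarrow>
     (\<forall>i\<in>S. \<forall>j\<in>S. (i, j) \<in> {(a, b). a \<in> S \<and> b \<in> S \<and> a \<noteq> b \<and> A $ a $ b > 0}\<^sup>*)"

end

theory Submission
  imports Defs
begin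

text \<open>Suppose the nonnegative support of \<open>x\<close> splits into parts \<open>S\<^sub>1\<close>, \<open>S\<^sub>2\<close> with no edges
  between them, and let \<open>x\<^sub>1\<close>, \<open>x\<^sub>2\<close> be the restrictions of \<open>x\<close> to them. Writing the
  eigenvalue equation as \<open>(A + \<Delta>) x = m x + \<sigma> (v\<^sup>T x) v\<close>, restricting to \<open>S\<^sub>k\<close> loses only
  couplings to negative entries, so \<open>x\<^sub>k\<^sup>T (A + \<Delta>) x\<^sub>k \<ge> m |x\<^sub>k|\<^sup>2\<close>, and the same holds for every
  combination \<open>z = \<alpha> x\<^sub>1 + \<beta> x\<^sub>2\<close>. Choosing \<open>v\<^sup>T z = 0\<close>, the quadratic form of \<open>M\<close> attains its
  maximum \<open>m\<close> at \<open>z\<close>, so \<open>z\<close> is an eigenvector for \<open>m\<close>. By irreducibility some vertex \<open>c\<close>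
  of a part on which \<open>z\<close> is a nonzero multiple of \<open>x\<close> has a neighbour where \<open>x < 0\<close>;
  comparing row \<open>c\<close> of the two eigenvalue equations gives \<open>\<sigma> (v\<^sup>T x) v\<^sub>c < 0\<close>, which is
  impossible.\<close>

lemma symmetric_mat_iff: "symmetric_mat X \<longleftrightarrow> (\<forall>i j. X$i$j = X$j$i)"
  by (auto simp: symmetric_mat_def transpose_def vec_eq_iff)

lemma symmetric_mat_inner_commute:
  fixes M :: "real^'n^'n"
  assumes "symmetric_mat M"
  shows "u \<bullet> (M *v w) = w \<bullet> (M *v u)"
proof -
  have "u \<bullet> (M *v w) = (u v* M) \<bullet> w" by (rule dot_lmul_matrix[symmetric])
  also have "u v* M = M *v u"
    using assms vector_transpose_matrix[of u M] by (simp add: symmetric_mat_def)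
  finally show ?thesis by (simp add: inner_commute)
qed

lemma symmetric_mat_quadratic_form_add:
  fixes M :: "real^'n^'n"
  assumes "symmetric_mat M"
  shows "(p + q) \<bullet> (M *v (p + q)) = p \<bullet> (M *v p) + 2 * (p \<bullet> (M *v q)) + q \<bullet> (M *v q)"
  using symmetric_mat_inner_commute[OF assms, of p q]
  by (simp add: matrix_vector_right_distrib inner_add_left inner_add_right)

lemma linear_coeff_zero_if_quadratic_nonpos:
  fixes a b :: real
  assumes "\<And>t. 2 * t * a + t\<^sup>2 * b \<le> 0"
  shows "a = 0"
proof (rule ccontr)
  assume "a \<noteq> 0"
  define k where "k = \<bar>b\<bar> + 1"
  have "k > 0" and "2 * k + b > 0" by (auto simp: k_def)
  have "2 * (a / k) * a + (a / k)\<^sup>2 * b = a\<^sup>2 * (2 * k + b) / k\<^sup>2"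
    using \<open>k > 0\<close> by (simp add: power2_eq_square field_simps)
  also have "\<dots> > 0"
    using \<open>a \<noteq> 0\<close> \<open>k > 0\<close> \<open>2 * k + b > 0\<close> by simp
  finally show False using assms[of "a / k"] by linarith
qed

text \<open>Perturbing \<open>z\<close> along \<open>y\<close> gives a quadratic in \<open>t\<close> that is nowhere positive, so its
  linear coefficient \<open>y \<bullet> (M z - c z)\<close> vanishes.\<close>
lemma quadratic_form_max_imp_eigenvector:
  fixes M :: "real^'n^'n"
  assumes "symmetric_mat M"
    and le: "\<And>y. y \<bullet> (M *v y) \<le> c * (y \<bullet> y)"
    and eq: "z \<bullet> (M *v z) = c * (z \<bullet> z)"
  shows "M *v z = c *\<^sub>R z"
proof -
  have "y \<bullet> (M *v z - c *\<^sub>R z) = 0" for y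
  proof (rule linear_coeff_zero_if_quadratic_nonpos)
    fix t
    have "(z + t *\<^sub>R y) \<bullet> (M *v (z + t *\<^sub>R y)) \<le> c * ((z + t *\<^sub>R y) \<bullet> (z + t *\<^sub>R y))"
      by (rule le)
    then show "2 * t * (y \<bullet> (M *v z - c *\<^sub>R z)) + t\<^sup>2 * (y \<bullet> (M *v y) - c * (y \<bullet> y)) \<le> 0"
      using eq symmetric_mat_inner_commute[OF assms(1), of z y]
      unfolding symmetric_mat_quadratic_form_add[OF assms(1)]
      by (simp add: matrix_vector_mult_scaleR inner_add_left inner_add_right inner_diff_right
          power2_eq_square algebra_simps inner_commute)
  qed
  from this[of "M *v z - c *\<^sub>R z"] show ?thesis by simp
qed

lemma finite_eigenvalues_symmetric:
  fixes M :: "real^'n^'n"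
  assumes "symmetric_mat M"
  shows "finite {l. \<exists>x. x \<noteq> 0 \<and> M *v x = l *\<^sub>R x}" (is "finite ?E")
proof -
  define ev where "ev l = (SOME x. x \<noteq> 0 \<and> M *v x = l *\<^sub>R x)" for l
  have ev: "ev l \<noteq> 0 \<and> M *v ev l = l *\<^sub>R ev l" if "l \<in> ?E" for l
    using someI_ex[of "\<lambda>x. x \<noteq> 0 \<and> M *v x = l *\<^sub>R x"] that unfolding ev_def by auto
  have "inj_on ev ?E"
  proof (rule inj_onI)
    fix a b assume a: "a \<in> ?E" and b: "b \<in> ?E" and "ev a = ev b"
    then have "a *\<^sub>R ev a = b *\<^sub>R ev a" using ev[OF a] ev[OF b] by metis
    then show "a = b" using ev[OF a] by (simp add: scaleR_cancel_right)
  qed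
  moreover have "pairwise orthogonal (ev ` ?E)"
  proof (rule pairwiseI)
    fix p q assume "p \<in> ev ` ?E" "q \<in> ev ` ?E" "p \<noteq> q"
    then obtain a b where a: "a \<in> ?E" "p = ev a" and b: "b \<in> ?E" "q = ev b" and "a \<noteq> b"
      by blast
    have "a * (p \<bullet> q) = q \<bullet> (M *v p)" using ev[OF a(1)] a(2) by (simp add: inner_commute)
    also have "\<dots> = p \<bullet> (M *v q)" by (rule symmetric_mat_inner_commute[OF assms])
    also have "\<dots> = b * (p \<bullet> q)" using ev[OF b(1)] b(2) by simp
    finally show "orthogonal p q" using \<open>a \<noteq> b\<close> by (simp add: orthogonal_def)
  qed
  then have "finite (ev ` ?E)" by (rule pairwise_orthogonal_imp_finite)
  ultimately show ?thesis using finite_imageD by blast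
qed

text \<open>The maximum of the quadratic form on the unit sphere is attained, at an eigenvector.\<close>
lemma quadratic_form_le_lambda_max:
  fixes M :: "real^'n^'n"
  assumes "symmetric_mat M"
  shows "y \<bullet> (M *v y) \<le> lambda_max M * (y \<bullet> y)"
proof -
  let ?f = "\<lambda>y. y \<bullet> (M *v y)"
  have "sphere (0 :: real^'n) 1 \<noteq> {}" by simp
  moreover have "continuous_on (sphere 0 1) ?f" by (intro continuous_intros)
  ultimately obtain z where z: "z \<in> sphere 0 1"
    and max: "\<And>y. y \<in> sphere 0 1 \<Longrightarrow> ?f y \<le> ?f z"
    using continuous_attains_sup[OF compact_sphere] by blast
  have le: "?f y \<le> ?f z * (y \<bullet> y)" for y :: "real^'n"
  proof (cases "y = 0")
    case False
    define u where "u = (1 / norm y) *\<^sub>R y"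
    have "?f u \<le> ?f z" using False by (intro max) (simp add: u_def)
    moreover have "y = norm y *\<^sub>R u" using False by (simp add: u_def)
    then have "?f y = (norm y)\<^sup>2 * ?f u"
      by (metis inner_scaleR_left inner_scaleR_right matrix_vector_mult_scaleR mult.assoc
          power2_eq_square)
    ultimately show ?thesis
      using mult_right_mono[of "?f u" "?f z" "(norm y)\<^sup>2"] by (simp add: dot_square_norm mult.commute)
  qed simp
  have "z \<bullet> z = 1" using z by (simp add: dot_square_norm)
  then have "M *v z = ?f z *\<^sub>R z"
    by (intro quadratic_form_max_imp_eigenvector[OF assms le]) simp
  moreover have "z \<noteq> 0" using z by auto
  ultimately have "?f z \<le> lambda_max M"
    unfolding lambda_max_def using finite_eigenvalues_symmetric[OF assms] by (intro Max_ge) auto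
  then show ?thesis using le[of y] by (meson order_trans inner_ge_zero mult_right_mono)
qed

lemma lambda_max_eigenvector:
  fixes M :: "real^'n^'n"
  assumes "symmetric_mat M" and "lambda_max M * (z \<bullet> z) \<le> z \<bullet> (M *v z)"
  shows "M *v z = lambda_max M *\<^sub>R z"
  using assms quadratic_form_le_lambda_max[OF assms(1)]
  by (intro quadratic_form_max_imp_eigenvector) (auto intro: antisym)

lemma outer_mult_vec: "outer u w *v y = (w \<bullet> y) *\<^sub>R u"
  by (simp add: vec_eq_iff matrix_vector_mult_def outer_def inner_vec_def sum_distrib_left
      ac_simps)

lemma modularity_mult_vec:
  fixes A \<Delta> :: "real^'n^'n"
  shows "(A + \<Delta> - \<sigma> *\<^sub>R outer v v) *v w = (A + \<Delta>) *v w - (\<sigma> * (v \<bullet> w)) *\<^sub>R v"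
  by (simp add: matrix_vector_mult_diff_rdistrib scaleR_matrix_vector_assoc[symmetric]
      outer_mult_vec)

lemma symmetric_mat_add_diagonal:
  fixes A \<Delta> :: "real^'n^'n"
  assumes "symmetric_mat A" "diagonal_mat \<Delta>"
  shows "symmetric_mat (A + \<Delta>)"
  unfolding symmetric_mat_iff
proof (intro allI)
  fix i j
  show "(A + \<Delta>) $ i $ j = (A + \<Delta>) $ j $ i"
    using assms by (cases "i = j") (auto simp: symmetric_mat_iff diagonal_mat_def)
qed

lemma symmetric_mat_modularity:
  fixes A \<Delta> :: "real^'n^'n"
  assumes "symmetric_mat A" "diagonal_mat \<Delta>"
  shows "symmetric_mat (A + \<Delta> - \<sigma> *\<^sub>R outer v v)"
  using symmetric_mat_add_diagonal[OF assms]
  by (simp add: symmetric_mat_iff outer_def mult.commute)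

lemma diagonal_mat_mult_vec_nth:
  fixes \<Delta> :: "real^'n^'n"
  assumes "diagonal_mat \<Delta>"
  shows "(\<Delta> *v w) $ i = \<Delta>$i$i * w$i"
proof -
  have "(\<Delta> *v w) $ i = (\<Sum>j\<in>UNIV. if j = i then \<Delta>$i$i * w$i else 0)"
    unfolding matrix_vector_mult_def vec_lambda_beta
    by (rule sum.cong) (use assms in \<open>auto simp: diagonal_mat_def\<close>)
  then show ?thesis by simp
qed

definition restrict_vec :: "'n set \<Rightarrow> real^'n \<Rightarrow> real^'n" where
  "restrict_vec T x = (\<chi> j. if j \<in> T then x$j else 0)"

lemma restrict_vec_nth [simp]: "restrict_vec T x $ j = (if j \<in> T then x$j else 0)"
  by (simp add: restrict_vec_def)

lemma inner_restrict_vec_disjoint: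
  assumes "T \<inter> U = {}"
  shows "restrict_vec T x \<bullet> restrict_vec U y = 0"
  using assms unfolding inner_vec_def by (intro sum.neutral) auto

lemma inner_restrict_vec_self: "restrict_vec T x \<bullet> x = restrict_vec T x \<bullet> restrict_vec T x"
  unfolding inner_vec_def by (intro sum.cong) auto

lemma inner_nonneg_restrict_vec:
  assumes "nonneg_vec v" "T \<subseteq> {i. x$i \<ge> 0}"
  shows "v \<bullet> restrict_vec T x \<ge> 0"
  using assms unfolding inner_vec_def nonneg_vec_def by (intro sum_nonneg) auto

lemma inner_mult_vec_sum:
  fixes X :: "real^'n^'n"
  shows "u \<bullet> (X *v w) = (\<Sum>i\<in>UNIV. \<Sum>j\<in>UNIV. u$i * X$i$j * w$j)"
  by (simp add: inner_vec_def matrix_vector_mult_def sum_distrib_left mult.assoc)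

lemma inner_diagonal_mat_disjoint_support:
  fixes \<Delta> :: "real^'n^'n"
  assumes "diagonal_mat \<Delta>" "\<And>i. u$i * w$i = 0"
  shows "u \<bullet> (\<Delta> *v w) = 0"
proof -
  have "u \<bullet> (\<Delta> *v w) = (\<Sum>i\<in>UNIV. \<Delta>$i$i * (u$i * w$i))"
    unfolding inner_vec_def diagonal_mat_mult_vec_nth[OF assms(1)] by (simp add: ac_simps)
  then show ?thesis using assms(2) by simp
qed

text \<open>Restricting \<open>x\<close> to a part \<open>T\<close> of its nonnegative support that has no edges to the rest
  of that support only drops couplings \<open>x\<^sub>i a\<^sub>i\<^sub>j x\<^sub>j\<close> with \<open>x\<^sub>j < 0\<close>.\<close>
lemma inner_restrict_vec_mult_le:
  fixes A \<Delta> :: "real^'n^'n"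
  assumes "nonneg_mat A" "diagonal_mat \<Delta>" "T \<subseteq> {i. x$i \<ge> 0}"
    and no_edge: "\<And>i j. i \<in> T \<Longrightarrow> j \<notin> T \<Longrightarrow> x$j \<ge> 0 \<Longrightarrow> A$i$j = 0"
  shows "restrict_vec T x \<bullet> ((A + \<Delta>) *v x) \<le> restrict_vec T x \<bullet> ((A + \<Delta>) *v restrict_vec T x)"
proof -
  let ?y = "restrict_vec T x" and ?u = "restrict_vec (- T) x"
  have x: "x = ?y + ?u" by (simp add: vec_eq_iff)
  have "?y \<bullet> (\<Delta> *v ?u) = 0"
    using assms(2) by (rule inner_diagonal_mat_disjoint_support) simp
  moreover have "?y \<bullet> (A *v ?u) \<le> 0"
    unfolding inner_mult_vec_sum
  proof (intro sum_nonpos)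
    fix i j
    show "?y$i * A$i$j * ?u$j \<le> 0"
      using assms(1,3) no_edge[of i j]
      by (cases "x$j \<ge> 0") (auto simp: nonneg_mat_def mult_nonneg_nonpos)
  qed
  ultimately show ?thesis
    by (subst (1) x) (simp add: matrix_vector_right_distrib matrix_vector_mult_add_rdistrib
        inner_add_right)
qed

lemma restrict_vec_quadratic_form_ge:
  fixes A \<Delta> :: "real^'n^'n"
  assumes "nonneg_mat A" "diagonal_mat \<Delta>" "nonneg_vec v" "r \<ge> 0"
    and eigen: "(A + \<Delta>) *v x = m *\<^sub>R x + r *\<^sub>R v"
    and "T \<subseteq> {i. x$i \<ge> 0}" "\<And>i j. i \<in> T \<Longrightarrow> j \<notin> T \<Longrightarrow> x$j \<ge> 0 \<Longrightarrow> A$i$j = 0"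
  shows "m * (restrict_vec T x \<bullet> restrict_vec T x) \<le> restrict_vec T x \<bullet> ((A + \<Delta>) *v restrict_vec T x)"
proof -
  have "restrict_vec T x \<bullet> ((A + \<Delta>) *v x)
      = m * (restrict_vec T x \<bullet> restrict_vec T x) + r * (v \<bullet> restrict_vec T x)"
    unfolding eigen inner_add_right inner_scaleR_right inner_restrict_vec_self
    by (simp add: inner_commute)
  moreover have "r * (v \<bullet> restrict_vec T x) \<ge> 0"
    using assms(4) inner_nonneg_restrict_vec[OF assms(3,6)] by simp
  ultimately show ?thesis using inner_restrict_vec_mult_le[OF assms(1,2,6,7)] by simp
qed

lemma split_quadratic_form_ge:
  fixes A \<Delta> :: "real^'n^'n" and \<alpha> \<beta> :: real
  assumes "symmetric_mat A" "nonneg_mat A" "diagonal_mat \<Delta>" "nonneg_vec v" "r \<ge> 0"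
    and eigen: "(A + \<Delta>) *v x = m *\<^sub>R x + r *\<^sub>R v"
    and "S1 \<inter> S2 = {}" "S1 \<union> S2 = {i. x$i \<ge> 0}"
    and no_edge: "\<And>i j. i \<in> S1 \<Longrightarrow> j \<in> S2 \<Longrightarrow> A$i$j = 0"
  defines "z \<equiv> \<alpha> *\<^sub>R restrict_vec S1 x + \<beta> *\<^sub>R restrict_vec S2 x"
  shows "m * (z \<bullet> z) \<le> z \<bullet> ((A + \<Delta>) *v z)"
proof -
  let ?B = "A + \<Delta>" and ?x1 = "restrict_vec S1 x" and ?x2 = "restrict_vec S2 x"
  note part = restrict_vec_quadratic_form_ge[OF assms(2-6)]
  have part1: "m * (?x1 \<bullet> ?x1) \<le> ?x1 \<bullet> (?B *v ?x1)"
    using assms(8) by (intro part) (auto intro: no_edge)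
  have part2: "m * (?x2 \<bullet> ?x2) \<le> ?x2 \<bullet> (?B *v ?x2)"
  proof (intro part)
    fix i j assume "i \<in> S2" "j \<notin> S2" "x$j \<ge> 0"
    then have "A$j$i = 0" using assms(8) by (intro no_edge) auto
    then show "A$i$j = 0" using assms(1) by (simp add: symmetric_mat_iff)
  qed (use assms(8) in auto)
  have "?x1 \<bullet> (A *v ?x2) = 0"
    unfolding inner_mult_vec_sum by (intro sum.neutral ballI) (simp add: no_edge)
  moreover have "?x1 \<bullet> (\<Delta> *v ?x2) = 0"
    using assms(3,7) by (intro inner_diagonal_mat_disjoint_support) auto
  ultimately have cross: "?x1 \<bullet> (?B *v ?x2) = 0"
    by (simp add: matrix_vector_mult_add_rdistrib inner_add_right)
  have "m * (z \<bullet> z) = \<alpha>\<^sup>2 * (m * (?x1 \<bullet> ?x1)) + \<beta>\<^sup>2 * (m * (?x2 \<bullet> ?x2))"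
    using inner_restrict_vec_disjoint[OF assms(7), of x x]
    by (simp add: z_def inner_add_left inner_add_right inner_commute power2_eq_square
        algebra_simps)
  also have "\<dots> \<le> \<alpha>\<^sup>2 * (?x1 \<bullet> (?B *v ?x1)) + \<beta>\<^sup>2 * (?x2 \<bullet> (?B *v ?x2))"
    using part1 part2 by (intro add_mono mult_left_mono) auto
  also have "\<dots> = z \<bullet> (?B *v z)"
    unfolding z_def symmetric_mat_quadratic_form_add[OF symmetric_mat_add_diagonal[OF assms(1,3)]]
    using cross by (simp add: matrix_vector_mult_scaleR power2_eq_square)
  finally show ?thesis .
qed

lemma rtrancl_leaves_set:
  assumes "(a, b) \<in> E\<^sup>*" "a \<in> P" "b \<notin> P"
  obtains c d where "(c, d) \<in> E" "c \<in> P" "d \<notin> P"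
  using assms by (induction rule: rtrancl_induct) blast+

lemma irreducible_mat_edge_leaving:
  assumes "irreducible_mat A" "a \<in> P" "b \<notin> P"
  obtains c d where "c \<in> P" "d \<notin> P" "A$c$d \<noteq> 0"
  using assms rtrancl_leaves_set[of a b "{(a, b). A$a$b \<noteq> 0}" P]
  unfolding irreducible_mat_def by blast

lemma not_induced_connected_split:
  assumes "nonneg_mat A" "\<not> induced_connected A S"
  obtains S1 S2 where "S1 \<inter> S2 = {}" "S1 \<union> S2 = S" "S1 \<noteq> {}" "S2 \<noteq> {}"
    "\<And>i j. i \<in> S1 \<Longrightarrow> j \<in> S2 \<Longrightarrow> A$i$j = 0"
proof -
  define R where "R = {(a, b). a \<in> S \<and> b \<in> S \<and> a \<noteq> b \<and> A$a$b > 0}"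
  obtain i0 j0 where "i0 \<in> S" "j0 \<in> S" "(i0, j0) \<notin> R\<^sup>*"
    using assms(2) unfolding induced_connected_def R_def by blast
  define S1 where "S1 = {j \<in> S. (i0, j) \<in> R\<^sup>*}"
  have "A$i$j = 0" if "i \<in> S1" "j \<in> S - S1" for i j
  proof (rule ccontr)
    assume "A$i$j \<noteq> 0"
    then have "(i, j) \<in> R"
      using that assms(1) by (auto simp: R_def S1_def nonneg_mat_def order_le_less)
    then have "(i0, j) \<in> R\<^sup>*" using that by (auto simp: S1_def intro: rtrancl_into_rtrancl)
    then show False using that by (simp add: S1_def)
  qed
  moreover have "i0 \<in> S1" "j0 \<in> S - S1"
    using \<open>i0 \<in> S\<close> \<open>j0 \<in> S\<close> \<open>(i0, j0) \<notin> R\<^sup>*\<close> by (auto simp: S1_def)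
  ultimately show thesis by (intro that[of S1 "S - S1"]) (auto simp: S1_def)
qed

text \<open>Row \<open>c\<close> of the equation for \<open>z\<close> minus \<open>\<gamma>\<close> times row \<open>c\<close> of the equation for \<open>x\<close>:
  all couplings cancel except those to the entries where \<open>x < 0\<close> and \<open>z\<close> vanishes.\<close>
lemma eigenvector_row_negative_coupling:
  fixes A \<Delta> :: "real^'n^'n"
  assumes "diagonal_mat \<Delta>"
    and x: "(A + \<Delta>) *v x = m *\<^sub>R x + r *\<^sub>R v"
    and z: "(A + \<Delta>) *v z = m *\<^sub>R z"
    and "c \<in> T" "\<And>j. j \<notin> T \<Longrightarrow> x$j \<ge> 0 \<Longrightarrow> A$c$j = 0"
    and zT: "\<And>j. j \<in> T \<Longrightarrow> z$j = \<gamma> * x$j" and zneg: "\<And>j. x$j < 0 \<Longrightarrow> z$j = 0"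
    and "\<gamma> \<noteq> 0"
  shows "r * v$c = (A *v restrict_vec {j. x$j < 0} x) $ c"
proof -
  let ?t = "(A *v restrict_vec {j. x$j < 0} x) $ c"
  have "(A *v z) $ c = \<gamma> * ((A *v x) $ c - ?t)"
    unfolding matrix_vector_mult_def vec_lambda_beta sum_subtractf[symmetric] sum_distrib_left
  proof (rule sum.cong)
    fix j
    show "A$c$j * z$j = \<gamma> * (A$c$j * x$j - A$c$j * restrict_vec {j. x$j < 0} x $ j)"
      using assms(5)[of j] zT[of j] zneg[of j] by (cases "j \<in> T"; cases "x$j < 0") auto
  qed simp
  moreover have "(A *v x) $ c = m * x$c + r * v$c - \<Delta>$c$c * x$c"
    using arg_cong[OF x, of "\<lambda>u. u $ c"]
    by (simp add: matrix_vector_mult_add_rdistrib diagonal_mat_mult_vec_nth[OF assms(1)])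
  moreover have "(A *v z) $ c = m * (\<gamma> * x$c) - \<Delta>$c$c * (\<gamma> * x$c)"
    using arg_cong[OF z, of "\<lambda>u. u $ c"] zT[OF assms(4)]
    by (simp add: matrix_vector_mult_add_rdistrib diagonal_mat_mult_vec_nth[OF assms(1)])
  ultimately have "\<gamma> * (r * v$c - ?t) = 0" by algebra
  then show ?thesis using \<open>\<gamma> \<noteq> 0\<close> by simp
qed

text \<open>Irreducibility yields an edge from \<open>T\<close> leaving the nonnegative support, which makes the
  coupling to the negative part strictly negative, against \<open>r v \<ge> 0\<close>.\<close>
lemma eigenvector_not_scaled_on_side:
  fixes A \<Delta> :: "real^'n^'n"
  assumes "irreducible_mat A" "nonneg_mat A" "diagonal_mat \<Delta>" "nonneg_vec v" "r \<ge> 0"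
    and x: "(A + \<Delta>) *v x = m *\<^sub>R x + r *\<^sub>R v"
    and z: "(A + \<Delta>) *v z = m *\<^sub>R z"
    and "T \<inter> U = {}" "T \<union> U = {i. x$i \<ge> 0}" "T \<noteq> {}" "U \<noteq> {}"
    and no_edge: "\<And>i j. i \<in> T \<Longrightarrow> j \<in> U \<Longrightarrow> A$i$j = 0"
    and "\<And>j. j \<in> T \<Longrightarrow> z$j = \<gamma> * x$j" "\<And>j. x$j < 0 \<Longrightarrow> z$j = 0" "\<gamma> \<noteq> 0"
  shows False
proof -
  obtain a b where "a \<in> T" "b \<notin> T" using assms(8,10,11) by blast
  then obtain c d where cd: "c \<in> T" "d \<notin> T" "A$c$d \<noteq> 0"
    using irreducible_mat_edge_leaving[OF assms(1)] by metis
  have "x$d < 0" using cd no_edge assms(9) by fastforce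
  have "r * v$c = (A *v restrict_vec {j. x$j < 0} x) $ c"
    using assms(9) no_edge[OF cd(1)]
    by (intro eigenvector_row_negative_coupling[OF assms(3) x z cd(1) _ assms(13-15)]) auto
  also have "\<dots> < (\<Sum>j\<in>(UNIV :: 'n set). 0)"
    unfolding matrix_vector_mult_def vec_lambda_beta
  proof (rule sum_strict_mono_ex1)
    show "\<forall>j\<in>UNIV. A$c$j * restrict_vec {j. x$j < 0} x $ j \<le> 0"
      using assms(2) by (auto simp: nonneg_mat_def mult_nonneg_nonpos)
    show "\<exists>j\<in>UNIV. A$c$j * restrict_vec {j. x$j < 0} x $ j < 0"
      using assms(2) cd(3) \<open>x$d < 0\<close>
      by (intro bexI[of _ d]) (auto simp: nonneg_mat_def order_le_less intro: mult_pos_neg)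
  qed simp
  finally show False using assms(4,5) by (simp add: nonneg_vec_def mult_nonneg_nonneg leD)
qed

lemma split_combination_not_eigenvector:
  fixes A \<Delta> :: "real^'n^'n" and \<alpha> \<beta> :: real
  assumes "symmetric_mat A" "irreducible_mat A" "nonneg_mat A" "diagonal_mat \<Delta>"
    and "nonneg_vec v" "r \<ge> 0"
    and x: "(A + \<Delta>) *v x = m *\<^sub>R x + r *\<^sub>R v"
    and split: "S1 \<inter> S2 = {}" "S1 \<union> S2 = {i. x$i \<ge> 0}" "S1 \<noteq> {}" "S2 \<noteq> {}"
    and no_edge: "\<And>i j. i \<in> S1 \<Longrightarrow> j \<in> S2 \<Longrightarrow> A$i$j = 0"
    and "\<alpha> \<noteq> 0 \<or> \<beta> \<noteq> 0"
  defines "z \<equiv> \<alpha> *\<^sub>R restrict_vec S1 x + \<beta> *\<^sub>R restrict_vec S2 x"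
  shows "(A + \<Delta>) *v z \<noteq> m *\<^sub>R z"
proof
  assume z: "(A + \<Delta>) *v z = m *\<^sub>R z"
  have z1: "z$j = \<alpha> * x$j" if "j \<in> S1" for j
    using that split(1) by (auto simp: z_def)
  have z2: "z$j = \<beta> * x$j" if "j \<in> S2" for j
    using that split(1) by (auto simp: z_def)
  have z_neg: "z$j = 0" if "x$j < 0" for j
  proof -
    have "j \<notin> S1 \<union> S2" using that split(2) by auto
    then show ?thesis by (simp add: z_def)
  qed
  show False
  proof (cases "\<alpha> = 0")
    case False
    show False
      by (rule eigenvector_not_scaled_on_side[OF assms(2,3,4,5,6) x z split no_edge z1 z_neg False])
  next
    case True
    then have "\<beta> \<noteq> 0" using \<open>\<alpha> \<noteq> 0 \<or> \<beta> \<noteq> 0\<close> by simp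
    have "S2 \<inter> S1 = {}" "S2 \<union> S1 = {i. x$i \<ge> 0}" using split(1,2) by auto
    moreover have "A$i$j = 0" if "i \<in> S2" "j \<in> S1" for i j
      using no_edge[OF that(2,1)] assms(1) by (simp add: symmetric_mat_iff)
    ultimately show False
      using eigenvector_not_scaled_on_side[OF assms(2,3,4,5,6) x z _ _ split(4,3) _ z2 z_neg
          \<open>\<beta> \<noteq> 0\<close>]
      by blast
  qed
qed

lemma exists_combination_orthogonal:
  fixes v p q :: "'a::real_inner"
  obtains \<alpha> \<beta> :: real where "\<alpha> \<noteq> 0 \<or> \<beta> \<noteq> 0" "v \<bullet> (\<alpha> *\<^sub>R p + \<beta> *\<^sub>R q) = 0"
proof (cases "v \<bullet> p = 0")
  case True
  then show thesis by (intro that[of 1 0]) simp_all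
next
  case False
  then show thesis by (intro that[of "v \<bullet> q" "- (v \<bullet> p)"]) (simp_all add: inner_diff_right)
qed

theorem lemma3p3:
  fixes A \<Delta> :: "real^'n^'n" and v x :: "real^'n" and \<sigma> :: real
  assumes "symmetric_mat A" and "nonneg_mat A" and "irreducible_mat A"
    and "diagonal_mat \<Delta>"
    and "v \<noteq> 0" and "nonneg_vec v" and "\<sigma> > 0"
    and "x \<noteq> 0"
    and "(A + \<Delta> - \<sigma> *\<^sub>R outer v v) *v x = lambda_max (A + \<Delta> - \<sigma> *\<^sub>R outer v v) *\<^sub>R x"
    and "v \<bullet> x \<ge> 0"
  shows "induced_connected A {i. x $ i \<ge> 0}"
proof (rule ccontr)
  define M where "M = A + \<Delta> - \<sigma> *\<^sub>R outer v v"
  define r where "r = \<sigma> * (v \<bullet> x)"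
  have "r \<ge> 0" using assms(7,10) by (simp add: r_def)
  have "(A + \<Delta>) *v x - r *\<^sub>R v = lambda_max M *\<^sub>R x"
    using assms(9) unfolding M_def modularity_mult_vec r_def .
  then have x: "(A + \<Delta>) *v x = lambda_max M *\<^sub>R x + r *\<^sub>R v" by (simp add: diff_eq_eq)
  assume "\<not> induced_connected A {i. x $ i \<ge> 0}"
  then obtain S1 S2 where split: "S1 \<inter> S2 = {}" "S1 \<union> S2 = {i. x$i \<ge> 0}" "S1 \<noteq> {}" "S2 \<noteq> {}"
    and no_edge: "\<And>i j. i \<in> S1 \<Longrightarrow> j \<in> S2 \<Longrightarrow> A$i$j = 0"
    using not_induced_connected_split[OF assms(2)] by metis
  obtain \<alpha> \<beta> :: real where "\<alpha> \<noteq> 0 \<or> \<beta> \<noteq> 0"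
    and "v \<bullet> (\<alpha> *\<^sub>R restrict_vec S1 x + \<beta> *\<^sub>R restrict_vec S2 x) = 0" (is "v \<bullet> ?z = 0")
    by (rule exists_combination_orthogonal)
  have "lambda_max M * (?z \<bullet> ?z) \<le> ?z \<bullet> ((A + \<Delta>) *v ?z)"
    by (rule split_quadratic_form_ge[OF assms(1,2,4,6) \<open>r \<ge> 0\<close> x split(1,2) no_edge])
  then have "M *v ?z = lambda_max M *\<^sub>R ?z"
    using \<open>v \<bullet> ?z = 0\<close> symmetric_mat_modularity[OF assms(1,4)]
    by (intro lambda_max_eigenvector) (simp_all add: M_def modularity_mult_vec)
  then have "(A + \<Delta>) *v ?z = lambda_max M *\<^sub>R ?z"
    using \<open>v \<bullet> ?z = 0\<close> by (simp add: M_def modularity_mult_vec)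
  with split_combination_not_eigenvector[OF assms(1,3,2,4,6) \<open>r \<ge> 0\<close> x split no_edge
      \<open>\<alpha> \<noteq> 0 \<or> \<beta> \<noteq> 0\<close>]
  show False by blast
qed

end
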